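(* Let $X$ be a continuous random variable with support contained in $[0,\infty)$, cumulative distribution function $F$ and probability density function $f$. Let $\theta_1\in\mathbb{R}$, $\theta_2>0$, $\theta_3>0$, and define $Y=\theta_1-\theta_2\log(X)+\theta_3X$. Put $y_{\min}=\theta_1+\theta_2-\theta_2\log(\theta_2/\theta_3)$, and for $y\ge y_{\min}$ define $$x_L(y)=-\frac{\theta_2}{\theta_3}W_0\!\left(-\frac{\theta_3}{\theta_2}\exp\!\left(-\frac{y-\theta_1}{\theta_2}\right)\right),\qquad x_U(y)=-\frac{\theta_2}{\theta_3}W_{-1}\!\left(-\frac{\theta_3}{\theta_2}\exp\!\left(-\frac{y-\theta_1}{\theta_2}\right)\right),$$ which are the solutions of $y=\theta_1-\theta_2\log x+\theta_3x$ in $(0,\theta_2/\theta_3]$ and $[\theta_2/\theta_3,\infty)$ respectively. Then $Y$ takes values in $[y_{\min},\infty)$, and for $y\ge y_{\min}$ its cumulative distribution function is $$\Pr(Y\le y)=F\big(x_U(y)\big)-F\big(x_L(y)\big),$$ and (for $y>y_{\min}$) its probability density function is $$f_Y(y)=\frac{x_L(y)}{\theta_2-\theta_3x_L(y)}\,f\big(x_L(y)\big)+\frac{x_U(y)}{\theta_3x_U(y)-\theta_2}\,f\big(x_U(y)\big).$$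
   Context: $W_0$ and $W_{-1}$ denote the two real branches of the Lambert W function, i.e. the real solutions $w$ of $w e^{w}=z$ for $z\in[-1/e,0)$, with $W_0(z)\ge -1$ and $W_{-1}(z)\le -1$. The random variable $Y$ is called the (log-Lambert W) transform of $X$ with parameters $\theta=(\theta_1,\theta_2,\theta_3)$. *)

theory Defs
  imports "HOL-Probability.Probability"
begin

definition lambertW0 :: "real \<Rightarrow> real" where
  "lambertW0 z = (THE w. -1 \<le> w \<and> w * exp w = z)"

definition lambertWm1 :: "real \<Rightarrow> real" where
  "lambertWm1 z = (THE w. w \<le> -1 \<and> w * exp w = z)"

definition llw_ymin :: "real \<Rightarrow> real \<Rightarrow> real \<Rightarrow> real" where
  "llw_ymin t1 t2 t3 = t1 + t2 - t2 * ln (t2 / t3)"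

definition llw_xL :: "real \<Rightarrow> real \<Rightarrow> real \<Rightarrow> real \<Rightarrow> real" where
  "llw_xL t1 t2 t3 y = - (t2 / t3) * lambertW0 (- (t3 / t2) * exp (- (y - t1) / t2))"

definition llw_xU :: "real \<Rightarrow> real \<Rightarrow> real \<Rightarrow> real \<Rightarrow> real" where
  "llw_xU t1 t2 t3 y = - (t2 / t3) * lambertWm1 (- (t3 / t2) * exp (- (y - t1) / t2))"

end

theory Submission
  imports Defs "HOL-Real_Asymp.Real_Asymp"
begin

text \<open>
  For \<open>t2, t3 > 0\<close> the map \<open>h x = t1 - t2 ln x + t3 x\<close> decreases strictly on \<open>(0, t2/t3]\<close>,
  increases strictly on \<open>[t2/t3, \<infinity>)\<close>, attains its minimum \<open>y_min\<close> at \<open>t2/t3\<close> and tends to \<open>\<infinity>\<close>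
  at both ends of \<open>(0, \<infinity>)\<close>. So every \<open>y \<ge> y_min\<close> has one preimage on each branch, and
  \<open>{h \<le> y}\<close> is the interval between them. Writing \<open>w = -(t3/t2) x\<close>, the equation \<open>h x = y\<close>
  becomes \<open>w e\<^sup>w = -(t3/t2) exp (-(y - t1)/t2)\<close> with \<open>w \<ge> -1\<close> on the left branch and \<open>w \<le> -1\<close>
  on the right one; as \<open>w e\<^sup>w\<close> is injective on either side of \<open>-1\<close>, the preimages are
  \<open>x_L y\<close> and \<open>x_U y\<close>. Since \<open>X\<close> has a density it has no atoms, so \<open>X > 0\<close> almost surely and
  \<open>{Y \<le> y} = {x_L y \<le> X \<le> x_U y}\<close> up to a null set, which is the CDF. The density of \<open>Y\<close>
  follows by substituting \<open>y = h x\<close> on each branch separately, the Jacobian being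
  \<open>\<bar>h' x\<bar> = \<bar>t3 x - t2\<bar> / x\<close>; the distribution of \<open>Y\<close> is then identified through its values
  on the half-lines \<open>(-\<infinity>, y]\<close>.
\<close>

lemma nn_integral_substitution_antimono:
  fixes f :: "real \<Rightarrow> real"
  assumes [measurable]: "f \<in> borel_measurable borel" "g \<in> borel_measurable borel"
    "g' \<in> borel_measurable borel"
    and derivg: "\<And>x. x \<in> {a..b} \<Longrightarrow> (g has_real_derivative g' x) (at x)"
    and contg': "continuous_on {a..b} g'"
    and derivg_nonpos: "\<And>x. x \<in> {a..b} \<Longrightarrow> g' x \<le> 0"
    and "a \<le> b"
  shows "(\<integral>\<^sup>+x. f x * indicator {g b..g a} x \<partial>lborel) =
         (\<integral>\<^sup>+x. f (g x) * - g' x * indicator {a..b} x \<partial>lborel)"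
proof -
  have "((\<lambda>x. g (- x)) has_real_derivative - g' (- x)) (at x)" if "x \<in> {-b..-a}" for x
    using DERIV_chain2[OF derivg DERIV_minus[OF DERIV_ident], of x] that by auto
  moreover have "continuous_on {-b..-a} (\<lambda>x. - g' (- x))"
    by (intro continuous_on_minus continuous_on_compose2[OF contg'])
      (auto intro!: continuous_intros)
  ultimately have "(\<integral>\<^sup>+x. f x * indicator {g b..g a} x \<partial>lborel) =
      (\<integral>\<^sup>+x. f (g (- x)) * - g' (- x) * indicator {-b..-a} x \<partial>lborel)"
    using nn_integral_substitution[of "\<lambda>x. g (- x)" "-b" "-a" f "\<lambda>x. - g' (- x)"]
      derivg_nonpos \<open>a \<le> b\<close> by (simp add: set_borel_measurable_def)
  also have "\<dots> = (\<integral>\<^sup>+x. f (g x) * - g' x * indicator {a..b} x \<partial>lborel)"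
  proof -
    have "(\<integral>\<^sup>+x. f (g x) * - g' x * indicator {a..b} x \<partial>lborel) =
        ennreal \<bar>-1\<bar> * (\<integral>\<^sup>+x. f (g (0 + -1 * x)) * - g' (0 + -1 * x)
          * indicator {a..b} (0 + -1 * x) \<partial>lborel)"
      by (rule nn_integral_real_affine) (auto simp: set_borel_measurable_def)
    also have "\<dots> = (\<integral>\<^sup>+x. f (g (- x)) * - g' (- x) * indicator {-b..-a} x \<partial>lborel)"
      by (auto intro!: nn_integral_cong simp: indicator_def)
    finally show ?thesis ..
  qed
  finally show ?thesis .
qed

lemma measure_eqI_atMost:
  fixes M N :: "real measure"
  assumes sets: "sets M = sets borel" "sets N = sets borel"
    and fin: "\<And>x. emeasure M {..x} < \<infinity>"
    and eq: "\<And>x. emeasure M {..x} = emeasure N {..x}"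
  shows "M = N"
proof (rule measure_eqI_generator_eq
    [where \<Omega> = UNIV and E = "range atMost" and A = "\<lambda>i. {..real i}"])
  have "sets (borel :: real measure) = sigma_sets UNIV (range atMost)"
    by (subst borel_eq_atMost) (rule sets_measure_of, auto)
  then show "sets M = sigma_sets UNIV (range atMost)" "sets N = sigma_sets UNIV (range atMost)"
    using sets by simp_all
  show "Int_stable (range atMost :: real set set)"
    by (auto simp: Int_stable_def)
  show "(\<Union>i. {..real i}) = UNIV"
    by (auto intro: real_arch_simple)
  show "emeasure M {..real i} \<noteq> \<infinity>" for i
    using fin[of "real i"] by simp
qed (auto simp: eq)

lemma distributed_AE_neq:
  assumes "distributed M lborel X f"
  shows "AE \<omega> in M. X \<omega> \<noteq> (a :: real)"
proof (rule AE_I')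
  have [measurable]: "f \<in> borel_measurable borel" "X \<in> borel_measurable M"
    using distributed_borel_measurable[OF assms] distributed_measurable[OF assms] by simp_all
  have "emeasure M (X -` {a} \<inter> space M) = (\<integral>\<^sup>+x. f x * indicator {a} x \<partial>lborel)"
    by (rule distributed_emeasure[OF assms]) simp
  also have "\<dots> = 0"
    by simp
  finally show "X -` {a} \<inter> space M \<in> null_sets M"
    by (auto simp: null_sets_def)
qed auto

lemma mult_exp_strict_mono_on: "strict_mono_on {-1..} (\<lambda>w::real. w * exp w)"
proof (rule strict_mono_onI)
  fix a b :: real
  assume "a \<in> {-1..}" "b \<in> {-1..}" "a < b"
  have "\<exists>d. ((\<lambda>w. w * exp w) has_real_derivative d) (at x) \<and> 0 < d" if "a < x" for x
  proof -
    have "0 < (1 + x) * exp x" using that \<open>a \<in> {-1..}\<close> by simp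
    then show ?thesis
      by (intro exI[of _ "(1 + x) * exp x"]) (auto intro!: derivative_eq_intros simp: algebra_simps)
  qed
  then show "a * exp a < b * exp b"
    by (rule DERIV_pos_imp_increasing_open[OF \<open>a < b\<close>]) (auto intro!: continuous_intros)
qed

lemma mult_exp_strict_antimono_on: "strict_antimono_on {..-1} (\<lambda>w::real. w * exp w)"
proof (rule monotone_onI)
  fix a b :: real
  assume "a \<in> {..-1}" "b \<in> {..-1}" "a < b"
  have "\<exists>d. ((\<lambda>w. w * exp w) has_real_derivative d) (at x) \<and> d < 0" if "x < b" for x
  proof -
    have "(1 + x) * exp x < 0" using that \<open>b \<in> {..-1}\<close> by (simp add: mult_neg_pos)
    then show ?thesis
      by (intro exI[of _ "(1 + x) * exp x"]) (auto intro!: derivative_eq_intros simp: algebra_simps)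
  qed
  then show "b * exp b < a * exp a"
    by (rule DERIV_neg_imp_decreasing_open[OF \<open>a < b\<close>]) (auto intro!: continuous_intros)
qed

lemma lambertW0_mult_exp: "-1 \<le> w \<Longrightarrow> lambertW0 (w * exp w) = w"
  unfolding lambertW0_def
  by (rule the_equality)
    (use strict_mono_on_imp_inj_on[OF mult_exp_strict_mono_on] in \<open>auto dest: inj_onD\<close>)

lemma lambertWm1_mult_exp: "w \<le> -1 \<Longrightarrow> lambertWm1 (w * exp w) = w"
  unfolding lambertWm1_def
proof (rule the_equality)
  fix v assume "w \<le> -1" "v \<le> -1 \<and> v * exp v = w * exp w"
  then show "v = w"
    using monotone_onD[OF mult_exp_strict_antimono_on, of v w]
      monotone_onD[OF mult_exp_strict_antimono_on, of w v]
    by (cases v w rule: linorder_cases) auto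
qed simp

definition llw_map :: "real \<Rightarrow> real \<Rightarrow> real \<Rightarrow> real \<Rightarrow> real" where
  "llw_map t1 t2 t3 x = t1 - t2 * ln x + t3 * x"

text \<open>The weights \<open>x / (t2 - t3 x)\<close> and \<open>x / (t3 x - t2)\<close> are \<open>1 / \<bar>h' x\<bar>\<close> at the
  lower and upper preimage \<open>x\<close> of \<open>y\<close>.\<close>
definition llw_lower_density :: "real \<Rightarrow> real \<Rightarrow> real \<Rightarrow> (real \<Rightarrow> real) \<Rightarrow> real \<Rightarrow> real" where
  "llw_lower_density t1 t2 t3 f y = (if llw_ymin t1 t2 t3 < y then
     llw_xL t1 t2 t3 y / (t2 - t3 * llw_xL t1 t2 t3 y) * f (llw_xL t1 t2 t3 y) else 0)"

definition llw_upper_density :: "real \<Rightarrow> real \<Rightarrow> real \<Rightarrow> (real \<Rightarrow> real) \<Rightarrow> real \<Rightarrow> real" where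
  "llw_upper_density t1 t2 t3 f y = (if llw_ymin t1 t2 t3 < y then
     llw_xU t1 t2 t3 y / (t3 * llw_xU t1 t2 t3 y - t2) * f (llw_xU t1 t2 t3 y) else 0)"

locale llw_params =
  fixes t1 t2 t3 :: real
  assumes t2_pos: "0 < t2" and t3_pos: "0 < t3"
begin

abbreviation h :: "real \<Rightarrow> real" where "h \<equiv> llw_map t1 t2 t3"
abbreviation xmin :: real where "xmin \<equiv> t2 / t3"
abbreviation ymin :: real where "ymin \<equiv> llw_ymin t1 t2 t3"
abbreviation xL :: "real \<Rightarrow> real" where "xL \<equiv> llw_xL t1 t2 t3"
abbreviation xU :: "real \<Rightarrow> real" where "xU \<equiv> llw_xU t1 t2 t3"

lemma xmin_pos: "0 < xmin"
  using t2_pos t3_pos by simp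

lemma llw_map_has_real_derivative: "0 < x \<Longrightarrow> (h has_real_derivative t3 - t2 / x) (at x)"
  unfolding llw_map_def[abs_def] by (auto intro!: derivative_eq_intros simp: field_simps)

lemma continuous_on_llw_map: "0 < a \<Longrightarrow> continuous_on {a..b} h"
  unfolding llw_map_def[abs_def] by (auto intro!: continuous_intros)

lemma borel_measurable_llw_map [measurable]: "h \<in> borel_measurable borel"
  unfolding llw_map_def[abs_def] by measurable

lemma llw_map_strict_antimono:
  assumes "0 < a" "a < b" "b \<le> xmin"
  shows "h b < h a"
proof (rule DERIV_neg_imp_decreasing_open[OF \<open>a < b\<close> _ continuous_on_llw_map[OF \<open>0 < a\<close>]])
  fix x assume x: "a < x" "x < b"
  then have "x < xmin" using assms by simp
  then have "t3 * x < t2" using t3_pos by (simp add: field_simps)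
  then have "t3 - t2 / x < 0" using x assms by (simp add: field_simps)
  then show "\<exists>d. (h has_real_derivative d) (at x) \<and> d < 0"
    using llw_map_has_real_derivative[of x] x assms by auto
qed

lemma llw_map_strict_mono:
  assumes "xmin \<le> a" "a < b"
  shows "h a < h b"
proof (rule DERIV_pos_imp_increasing_open[OF \<open>a < b\<close> _ continuous_on_llw_map])
  fix x assume x: "a < x" "x < b"
  then have "xmin < x" using assms by simp
  then have "t2 < t3 * x" using t3_pos by (simp add: field_simps)
  then have "0 < t3 - t2 / x" using x assms xmin_pos by (simp add: field_simps)
  then show "\<exists>d. (h has_real_derivative d) (at x) \<and> 0 < d"
    using llw_map_has_real_derivative[of x] x assms xmin_pos by auto
qed (use assms xmin_pos in simp)

lemma llw_map_xmin: "h xmin = ymin"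
  unfolding llw_map_def llw_ymin_def using t3_pos by simp

lemma ymin_less_llw_map: "0 < x \<Longrightarrow> x \<noteq> xmin \<Longrightarrow> ymin < h x"
  using llw_map_strict_antimono[of x xmin] llw_map_strict_mono[of xmin x] llw_map_xmin
  by (cases x xmin rule: linorder_cases) auto

lemma ymin_le_llw_map: "0 < x \<Longrightarrow> ymin \<le> h x"
  using ymin_less_llw_map[of x] llw_map_xmin by (cases "x = xmin") auto

lemma llw_map_at_right_0: "filterlim h at_top (at_right 0)"
  unfolding llw_map_def[abs_def] using t2_pos t3_pos by real_asymp

lemma llw_map_at_top: "filterlim h at_top at_top"
  unfolding llw_map_def[abs_def] using t2_pos t3_pos by real_asymp

lemma llw_map_lower_preimage:
  assumes "ymin \<le> y"
  obtains x where "0 < x" "x \<le> xmin" "h x = y"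
proof -
  have "\<forall>\<^sub>F x in at_right 0. y \<le> h x"
    using llw_map_at_right_0 by (simp add: filterlim_at_top)
  then obtain b where "0 < b" and b: "\<And>x. 0 < x \<Longrightarrow> x < b \<Longrightarrow> y \<le> h x"
    by (auto simp: eventually_at_right_field)
  define a where "a = min (b / 2) xmin"
  have "0 < a" "a < b" "a \<le> xmin" using \<open>0 < b\<close> xmin_pos by (auto simp: a_def)
  then obtain x where "a \<le> x" "x \<le> xmin" "h x = y"
    using IVT2'[of h xmin y a] b[of a] assms llw_map_xmin continuous_on_llw_map by auto
  with \<open>0 < a\<close> show ?thesis by (intro that) auto
qed

lemma llw_map_upper_preimage:
  assumes "ymin \<le> y"
  obtains x where "xmin \<le> x" "h x = y"
proof -
  have "\<forall>\<^sub>F x in at_top. y \<le> h x"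
    using llw_map_at_top by (simp add: filterlim_at_top)
  then obtain N where N: "\<And>x. N \<le> x \<Longrightarrow> y \<le> h x"
    by (auto simp: eventually_at_top_linorder)
  define b where "b = max N xmin"
  obtain x where "xmin \<le> x" "x \<le> b" "h x = y"
    using IVT'[of h xmin y b] N[of b] assms llw_map_xmin continuous_on_llw_map[OF xmin_pos]
    by (auto simp: b_def)
  then show ?thesis by (intro that) auto
qed

lemma lambertW_argument_llw_map:
  assumes "0 < x"
  shows "- (t3 / t2) * exp (- (h x - t1) / t2) = (- (t3 / t2) * x) * exp (- (t3 / t2) * x)"
proof -
  have "- (h x - t1) / t2 = ln x + - (t3 / t2) * x"
    using t2_pos by (simp add: llw_map_def field_simps)
  then have "exp (- (h x - t1) / t2) = x * exp (- (t3 / t2) * x)"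
    using assms by (simp only: exp_add exp_ln)
  then show ?thesis by simp
qed

lemma llw_xL_llw_map:
  assumes "0 < x" "x \<le> xmin"
  shows "xL (h x) = x"
proof -
  have w: "-1 \<le> - (t3 / t2) * x" using assms t2_pos t3_pos by (simp add: field_simps)
  show ?thesis
    unfolding llw_xL_def lambertW_argument_llw_map[OF \<open>0 < x\<close>] lambertW0_mult_exp[OF w]
    using t2_pos t3_pos by simp
qed

lemma llw_xU_llw_map:
  assumes "xmin \<le> x"
  shows "xU (h x) = x"
proof -
  have "0 < x" using assms xmin_pos by linarith
  have w: "- (t3 / t2) * x \<le> -1" using assms t2_pos t3_pos by (simp add: field_simps)
  show ?thesis
    unfolding llw_xU_def lambertW_argument_llw_map[OF \<open>0 < x\<close>] lambertWm1_mult_exp[OF w]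
    using t2_pos t3_pos by simp
qed

lemma llw_xL_bounds:
  assumes "ymin \<le> y"
  shows "0 < xL y" "xL y \<le> xmin" "h (xL y) = y"
proof -
  obtain x where x: "0 < x" "x \<le> xmin" "h x = y"
    using llw_map_lower_preimage[OF assms] .
  then have "xL y = x" using llw_xL_llw_map by blast
  then show "0 < xL y" "xL y \<le> xmin" "h (xL y) = y" using x by simp_all
qed

lemma llw_xU_bounds:
  assumes "ymin \<le> y"
  shows "xmin \<le> xU y" "h (xU y) = y"
proof -
  obtain x where x: "xmin \<le> x" "h x = y"
    using llw_map_upper_preimage[OF assms] .
  then have "xU y = x" using llw_xU_llw_map by blast
  then show "xmin \<le> xU y" "h (xU y) = y" using x by simp_all
qed

lemma llw_xL_less_xmin: "ymin < y \<Longrightarrow> xL y < xmin"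
  using llw_xL_bounds[of y] llw_map_xmin by (cases "xL y = xmin") auto

lemma llw_xU_greater_xmin: "ymin < y \<Longrightarrow> xmin < xU y"
  using llw_xU_bounds[of y] llw_map_xmin by (cases "xU y = xmin") auto

lemma llw_map_le_iff:
  assumes "0 < x" "ymin \<le> y"
  shows "h x \<le> y \<longleftrightarrow> xL y \<le> x \<and> x \<le> xU y"
proof (cases "x \<le> xmin")
  case True
  note L = llw_xL_bounds[OF assms(2)]
  have "h x \<le> y \<longleftrightarrow> xL y \<le> x"
    using llw_map_strict_antimono[OF assms(1), of "xL y"] llw_map_strict_antimono[OF L(1), of x]
      L True
    by (cases x "xL y" rule: linorder_cases) auto
  then show ?thesis using True llw_xU_bounds[OF assms(2)] by auto
next
  case False
  note U = llw_xU_bounds[OF assms(2)]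
  have "h x \<le> y \<longleftrightarrow> x \<le> xU y"
    using llw_map_strict_mono[of x "xU y"] llw_map_strict_mono[OF U(1), of x] U False
    by (cases x "xU y" rule: linorder_cases) auto
  then show ?thesis using False llw_xL_bounds[OF assms(2)] by auto
qed

lemma llw_xL_antimono: "ymin \<le> y1 \<Longrightarrow> y1 \<le> y2 \<Longrightarrow> xL y2 \<le> xL y1"
  using llw_map_le_iff[OF llw_xL_bounds(1), of y1 y2] llw_xL_bounds[of y1] by auto

lemma llw_xU_mono: "ymin \<le> y1 \<Longrightarrow> y1 \<le> y2 \<Longrightarrow> xU y1 \<le> xU y2"
  using llw_map_le_iff[of "xU y1" y2] llw_xU_bounds[of y1] xmin_pos by auto

text \<open>Outside \<open>[ymin, \<infinity>)\<close> the branches are junk values of \<open>THE\<close>, so measurability is shown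
  for the branches clamped at \<open>ymin\<close>, which are monotone.\<close>
lemma borel_measurable_llw_lower_density [measurable]:
  assumes [measurable]: "f \<in> borel_measurable borel"
  shows "llw_lower_density t1 t2 t3 f \<in> borel_measurable borel"
proof -
  define x where "x y = xL (max y ymin)" for y
  have "mono (\<lambda>y. - x y)"
    by (auto intro!: monoI llw_xL_antimono simp: x_def)
  then have "(\<lambda>y. - (- x y)) \<in> borel_measurable borel"
    using borel_measurable_mono borel_measurable_uminus by blast
  then have [measurable]: "x \<in> borel_measurable borel" by simp
  have "llw_lower_density t1 t2 t3 f =
      (\<lambda>y. if ymin < y then x y / (t2 - t3 * x y) * f (x y) else 0)"
    by (auto simp: llw_lower_density_def x_def max_def)
  then show ?thesis by simp
qed

lemma borel_measurable_llw_upper_density [measurable]: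
  assumes [measurable]: "f \<in> borel_measurable borel"
  shows "llw_upper_density t1 t2 t3 f \<in> borel_measurable borel"
proof -
  define x where "x y = xU (max y ymin)" for y
  have "mono x"
    by (auto intro!: monoI llw_xU_mono simp: x_def)
  then have [measurable]: "x \<in> borel_measurable borel"
    using borel_measurable_mono by blast
  have "llw_upper_density t1 t2 t3 f =
      (\<lambda>y. if ymin < y then x y / (t3 * x y - t2) * f (x y) else 0)"
    by (auto simp: llw_upper_density_def x_def max_def)
  then show ?thesis by simp
qed

lemma llw_lower_density_nonneg:
  assumes "\<And>x. 0 \<le> f x"
  shows "0 \<le> llw_lower_density t1 t2 t3 f y"
proof (cases "ymin < y")
  case True
  then have "0 < xL y" "xL y < xmin" using llw_xL_bounds(1) llw_xL_less_xmin by auto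
  then have "0 < t2 - t3 * xL y" using t3_pos by (simp add: field_simps)
  with \<open>0 < xL y\<close> assms show ?thesis by (simp add: llw_lower_density_def)
qed (simp add: llw_lower_density_def)

lemma llw_upper_density_nonneg:
  assumes "\<And>x. 0 \<le> f x"
  shows "0 \<le> llw_upper_density t1 t2 t3 f y"
proof (cases "ymin < y")
  case True
  then have "xmin < xU y" by (rule llw_xU_greater_xmin)
  then have "0 < xU y" "0 < t3 * xU y - t2"
    using xmin_pos t3_pos by (linarith, simp add: field_simps)
  with assms show ?thesis by (simp add: llw_upper_density_def)
qed (simp add: llw_upper_density_def)

lemma llw_lower_density_llw_map:
  assumes "0 < x" "x < xmin"
  shows "llw_lower_density t1 t2 t3 f (h x) * (t2 / x - t3) = f x"
proof -
  have "ymin < h x" "xL (h x) = x" "0 < t2 - t3 * x"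
    using ymin_less_llw_map llw_xL_llw_map assms t3_pos by (auto simp: field_simps)
  then show ?thesis using assms by (simp add: llw_lower_density_def field_simps)
qed

lemma llw_upper_density_llw_map:
  assumes "xmin < x"
  shows "llw_upper_density t1 t2 t3 f (h x) * (t3 - t2 / x) = f x"
proof -
  have "0 < x" using assms xmin_pos by linarith
  have "ymin < h x" "xU (h x) = x" "0 < t3 * x - t2"
    using ymin_less_llw_map llw_xU_llw_map assms \<open>0 < x\<close> t3_pos by (auto simp: field_simps)
  then show ?thesis using \<open>0 < x\<close> by (simp add: llw_upper_density_def field_simps)
qed

lemma nn_integral_llw_lower_density:
  assumes [measurable]: "f \<in> borel_measurable borel" and "ymin \<le> y"
  shows "(\<integral>\<^sup>+u. ennreal (llw_lower_density t1 t2 t3 f u) * indicator {ymin..y} u \<partial>lborel) =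
         (\<integral>\<^sup>+x. ennreal (f x) * indicator {xL y..xmin} x \<partial>lborel)"
proof -
  let ?g = "llw_lower_density t1 t2 t3 f"
  note L = llw_xL_bounds[OF \<open>ymin \<le> y\<close>]
  have "(\<integral>\<^sup>+u. ennreal (?g u) * indicator {ymin..y} u \<partial>lborel) =
      (\<integral>\<^sup>+u. ennreal (?g u * indicator {h xmin..h (xL y)} u) \<partial>lborel)"
    using L by (intro nn_integral_cong) (simp add: llw_map_xmin split: split_indicator)
  also have "\<dots> = (\<integral>\<^sup>+x. ennreal (?g (h x) * - (t3 - t2 / x) * indicator {xL y..xmin} x) \<partial>lborel)"
  proof (rule nn_integral_substitution_antimono[where g = h and a = "xL y" and b = xmin])
    show "?g \<in> borel_measurable borel"
      by (rule borel_measurable_llw_lower_density) fact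
    show "(\<lambda>x. t3 - t2 / x) \<in> borel_measurable borel"
      by measurable
    show "(h has_real_derivative t3 - t2 / x) (at x)" if "x \<in> {xL y..xmin}" for x
      using that L by (intro llw_map_has_real_derivative) auto
    show "continuous_on {xL y..xmin} (\<lambda>x. t3 - t2 / x)"
      using L by (auto intro!: continuous_intros)
    show "t3 - t2 / x \<le> 0" if "x \<in> {xL y..xmin}" for x
      using that L t3_pos by (auto simp: field_simps)
    show "h \<in> borel_measurable borel" "xL y \<le> xmin"
      using L by simp_all
  qed
  also have "\<dots> = (\<integral>\<^sup>+x. ennreal (f x) * indicator {xL y..xmin} x \<partial>lborel)"
  proof (rule nn_integral_cong_AE)
    show "AE x in lborel. ennreal (?g (h x) * - (t3 - t2 / x) * indicator {xL y..xmin} x) =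
        ennreal (f x) * indicator {xL y..xmin} x"
      using AE_lborel_singleton[of xmin]
    proof eventually_elim
      case (elim x)
      show ?case
      proof (cases "x \<in> {xL y..xmin}")
        case True
        then have "0 < x" "x < xmin" using elim L by auto
        then show ?thesis using True llw_lower_density_llw_map[of x f] by simp
      qed simp
    qed
  qed
  finally show ?thesis .
qed

lemma nn_integral_llw_upper_density:
  assumes [measurable]: "f \<in> borel_measurable borel" and "ymin \<le> y"
  shows "(\<integral>\<^sup>+u. ennreal (llw_upper_density t1 t2 t3 f u) * indicator {ymin..y} u \<partial>lborel) =
         (\<integral>\<^sup>+x. ennreal (f x) * indicator {xmin..xU y} x \<partial>lborel)"
proof -
  let ?g = "llw_upper_density t1 t2 t3 f"
  note U = llw_xU_bounds[OF \<open>ymin \<le> y\<close>]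
  have "(\<integral>\<^sup>+u. ennreal (?g u) * indicator {ymin..y} u \<partial>lborel) =
      (\<integral>\<^sup>+u. ennreal (?g u * indicator {h xmin..h (xU y)} u) \<partial>lborel)"
    using U by (intro nn_integral_cong) (simp add: llw_map_xmin split: split_indicator)
  also have "\<dots> = (\<integral>\<^sup>+x. ennreal (?g (h x) * (t3 - t2 / x) * indicator {xmin..xU y} x) \<partial>lborel)"
  proof (rule nn_integral_substitution[where g = h and a = xmin and b = "xU y"])
    show "set_borel_measurable borel {h xmin..h (xU y)} ?g"
      unfolding set_borel_measurable_def by measurable
    show "(h has_real_derivative t3 - t2 / x) (at x)" if "x \<in> {xmin..xU y}" for x
      using that xmin_pos by (intro llw_map_has_real_derivative) auto
    show "continuous_on {xmin..xU y} (\<lambda>x. t3 - t2 / x)"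
      using xmin_pos by (auto intro!: continuous_intros)
    show "0 \<le> t3 - t2 / x" if "x \<in> {xmin..xU y}" for x
    proof -
      have "0 < x" "t2 \<le> t3 * x"
        using that xmin_pos t3_pos by (simp, simp add: field_simps)
      then show ?thesis by (simp add: field_simps)
    qed
  qed (use U in simp)
  also have "\<dots> = (\<integral>\<^sup>+x. ennreal (f x) * indicator {xmin..xU y} x \<partial>lborel)"
  proof (rule nn_integral_cong_AE)
    show "AE x in lborel. ennreal (?g (h x) * (t3 - t2 / x) * indicator {xmin..xU y} x) =
        ennreal (f x) * indicator {xmin..xU y} x"
      using AE_lborel_singleton[of xmin]
    proof eventually_elim
      case (elim x)
      show ?case
      proof (cases "x \<in> {xmin..xU y}")
        case True
        then have "xmin < x" using elim by auto
        then show ?thesis using True llw_upper_density_llw_map[of x f] by simp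
      qed simp
    qed
  qed
  finally show ?thesis .
qed

end

locale llw_random_variable = llw_params t1 t2 t3 + prob_space M
  for t1 t2 t3 :: real and M :: "'a measure" +
  fixes X :: "'a \<Rightarrow> real" and f :: "real \<Rightarrow> real"
  assumes distributed_X: "distributed M lborel X (\<lambda>x. ennreal (f x))"
    and density_nonneg: "\<And>x. 0 \<le> f x"
    and AE_X_nonneg: "AE \<omega> in M. 0 \<le> X \<omega>"
begin

lemma measurable_X [measurable]: "X \<in> borel_measurable M"
  using distributed_measurable[OF distributed_X] by simp

lemma borel_measurable_density [measurable]: "f \<in> borel_measurable borel"
  using distributed_real_measurable[OF _ distributed_X] density_nonneg by simp

lemma AE_X_pos: "AE \<omega> in M. 0 < X \<omega>"
  using AE_X_nonneg distributed_AE_neq[OF distributed_X, of 0] by eventually_elim auto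

lemma AE_ymin_le_llw_map: "AE \<omega> in M. ymin \<le> h (X \<omega>)"
  using AE_X_pos by eventually_elim (rule ymin_le_llw_map)

lemma prob_llw_map_le:
  assumes "ymin \<le> y"
  shows "measure M {\<omega> \<in> space M. h (X \<omega>) \<le> y} =
    measure M {\<omega> \<in> space M. X \<omega> \<le> xU y} - measure M {\<omega> \<in> space M. X \<omega> \<le> xL y}"
proof -
  have "measure M {\<omega> \<in> space M. h (X \<omega>) \<le> y} =
      measure M ({\<omega> \<in> space M. X \<omega> \<le> xU y} - {\<omega> \<in> space M. X \<omega> \<le> xL y})"
  proof (rule measure_eq_AE)
    show "AE \<omega> in M. (\<omega> \<in> {\<omega> \<in> space M. h (X \<omega>) \<le> y}) =
        (\<omega> \<in> {\<omega> \<in> space M. X \<omega> \<le> xU y} - {\<omega> \<in> space M. X \<omega> \<le> xL y})"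
      using AE_X_pos distributed_AE_neq[OF distributed_X, of "xL y"]
      by eventually_elim (auto simp: llw_map_le_iff[OF _ assms])
  qed measurable
  also have "\<dots> = measure M {\<omega> \<in> space M. X \<omega> \<le> xU y} - measure M {\<omega> \<in> space M. X \<omega> \<le> xL y}"
    using llw_xL_bounds(2)[OF assms] llw_xU_bounds(1)[OF assms]
    by (intro finite_measure_Diff) auto
  finally show ?thesis .
qed

abbreviation llw_density :: "real \<Rightarrow> real" where
  "llw_density u \<equiv> llw_lower_density t1 t2 t3 f u + llw_upper_density t1 t2 t3 f u"

lemma llw_density_eq_0: "u \<le> ymin \<Longrightarrow> llw_density u = 0"
  by (simp add: llw_lower_density_def llw_upper_density_def)

lemma emeasure_llw_map_le:
  "emeasure M {\<omega> \<in> space M. h (X \<omega>) \<le> y} =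
    (\<integral>\<^sup>+u. ennreal (llw_density u) * indicator {..y} u \<partial>lborel)"
proof (cases "ymin \<le> y")
  case False
  have "emeasure M {\<omega> \<in> space M. h (X \<omega>) \<le> y} = emeasure M {}"
    using AE_ymin_le_llw_map False by (intro emeasure_eq_AE) auto
  moreover have "(\<integral>\<^sup>+u. ennreal (llw_density u) * indicator {..y} u \<partial>lborel) =
      (\<integral>\<^sup>+u. 0 \<partial>(lborel :: real measure))"
  proof (rule nn_integral_cong)
    fix u
    show "ennreal (llw_density u) * indicator {..y} u = 0"
      using False llw_density_eq_0[of u] by (simp split: split_indicator)
  qed
  ultimately show ?thesis by simp
next
  case True
  note L = llw_xL_bounds[OF True] and U = llw_xU_bounds[OF True]
  have "emeasure M {\<omega> \<in> space M. h (X \<omega>) \<le> y} = emeasure M (X -` {xL y..xU y} \<inter> space M)"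
    using AE_X_pos by (intro emeasure_eq_AE) (auto simp: llw_map_le_iff[OF _ True])
  also have "\<dots> = (\<integral>\<^sup>+x. ennreal (f x) * indicator {xL y..xU y} x \<partial>lborel)"
    by (rule distributed_emeasure[OF distributed_X]) simp
  also have "\<dots> = (\<integral>\<^sup>+x. ennreal (f x) * indicator {xL y..xmin} x
      + ennreal (f x) * indicator {xmin..xU y} x \<partial>lborel)"
    using AE_lborel_singleton[of xmin]
    by (intro nn_integral_cong_AE, eventually_elim) (use L U in \<open>auto simp: indicator_def\<close>)
  also have "\<dots> = (\<integral>\<^sup>+x. ennreal (f x) * indicator {xL y..xmin} x \<partial>lborel)
      + (\<integral>\<^sup>+x. ennreal (f x) * indicator {xmin..xU y} x \<partial>lborel)"
    by (rule nn_integral_add) auto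
  also have "\<dots> = (\<integral>\<^sup>+u. ennreal (llw_lower_density t1 t2 t3 f u) * indicator {ymin..y} u \<partial>lborel)
      + (\<integral>\<^sup>+u. ennreal (llw_upper_density t1 t2 t3 f u) * indicator {ymin..y} u \<partial>lborel)"
    using nn_integral_llw_lower_density[OF _ True] nn_integral_llw_upper_density[OF _ True] by simp
  also have "\<dots> = (\<integral>\<^sup>+u. ennreal (llw_lower_density t1 t2 t3 f u) * indicator {ymin..y} u
      + ennreal (llw_upper_density t1 t2 t3 f u) * indicator {ymin..y} u \<partial>lborel)"
    by (rule nn_integral_add[symmetric]) auto
  also have "\<dots> = (\<integral>\<^sup>+u. ennreal (llw_density u) * indicator {..y} u \<partial>lborel)"
  proof (intro nn_integral_cong)
    fix u
    show "ennreal (llw_lower_density t1 t2 t3 f u) * indicator {ymin..y} u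
        + ennreal (llw_upper_density t1 t2 t3 f u) * indicator {ymin..y} u
        = ennreal (llw_density u) * indicator {..y} u"
      using llw_density_eq_0[of u] density_nonneg
        llw_lower_density_nonneg[of f u] llw_upper_density_nonneg[of f u]
      by (cases "ymin \<le> u") (auto simp: indicator_def ennreal_plus simp del: ennreal_plus_if)
  qed
  finally show ?thesis .
qed

lemma distributed_llw_map: "distributed M lborel (\<lambda>\<omega>. h (X \<omega>)) (\<lambda>u. ennreal (llw_density u))"
  unfolding distributed_def
proof (intro conjI)
  show "distr M lborel (\<lambda>\<omega>. h (X \<omega>)) = density lborel (\<lambda>u. ennreal (llw_density u))"
  proof (rule measure_eqI_atMost)
    fix y
    have distr_eq: "emeasure (distr M lborel (\<lambda>\<omega>. h (X \<omega>))) {..y} =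
        emeasure M {\<omega> \<in> space M. h (X \<omega>) \<le> y}"
      by (subst emeasure_distr) (auto intro!: arg_cong[where f = "emeasure M"])
    show "emeasure (distr M lborel (\<lambda>\<omega>. h (X \<omega>))) {..y} < \<infinity>"
      unfolding distr_eq by (simp add: less_top[symmetric])
    show "emeasure (distr M lborel (\<lambda>\<omega>. h (X \<omega>))) {..y}
        = emeasure (density lborel (\<lambda>u. ennreal (llw_density u))) {..y}"
      unfolding distr_eq by (simp add: emeasure_llw_map_le emeasure_density)
  qed simp_all
  show "(\<lambda>u. ennreal (llw_density u)) \<in> borel_measurable lborel"
    by measurable
  show "(\<lambda>\<omega>. h (X \<omega>)) \<in> measurable M lborel"
    by measurable
qed

end

theorem mainTheorem1:
  fixes M :: "'a measure" and X :: "'a \<Rightarrow> real" and f F :: "real \<Rightarrow> real"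
    and t1 t2 t3 :: real
  assumes "prob_space M"
    and distX: "distributed M lborel X (\<lambda>x. ennreal (f x))"
    and f_nonneg: "\<And>x. 0 \<le> f x"
    and supp: "AE \<omega> in M. 0 \<le> X \<omega>"
    and F_def: "\<And>x. F x = measure M {\<omega> \<in> space M. X \<omega> \<le> x}"
    and "t2 > 0" and "t3 > 0"
  defines "Y \<equiv> (\<lambda>\<omega>. t1 - t2 * ln (X \<omega>) + t3 * X \<omega>)"
  shows "(AE \<omega> in M. llw_ymin t1 t2 t3 \<le> Y \<omega>)
    \<and> (\<forall>y \<ge> llw_ymin t1 t2 t3.
          measure M {\<omega> \<in> space M. Y \<omega> \<le> y} = F (llw_xU t1 t2 t3 y) - F (llw_xL t1 t2 t3 y))
    \<and> distributed M lborel Y (\<lambda>y. ennreal (if llw_ymin t1 t2 t3 < y then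
          llw_xL t1 t2 t3 y / (t2 - t3 * llw_xL t1 t2 t3 y) * f (llw_xL t1 t2 t3 y)
        + llw_xU t1 t2 t3 y / (t3 * llw_xU t1 t2 t3 y - t2) * f (llw_xU t1 t2 t3 y)
        else 0))"
proof -
  interpret llw_random_variable t1 t2 t3 M X f
    using assms
    by (intro llw_random_variable.intro llw_params.intro llw_random_variable_axioms.intro)
  have Y: "Y = (\<lambda>\<omega>. llw_map t1 t2 t3 (X \<omega>))"
    unfolding Y_def llw_map_def ..
  have density: "(\<lambda>y. ennreal (if llw_ymin t1 t2 t3 < y then
          llw_xL t1 t2 t3 y / (t2 - t3 * llw_xL t1 t2 t3 y) * f (llw_xL t1 t2 t3 y)
        + llw_xU t1 t2 t3 y / (t3 * llw_xU t1 t2 t3 y - t2) * f (llw_xU t1 t2 t3 y)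
        else 0)) = (\<lambda>y. ennreal (llw_density y))"
    by (auto simp: llw_lower_density_def llw_upper_density_def)
  show ?thesis
    unfolding Y density
    using AE_ymin_le_llw_map prob_llw_map_le distributed_llw_map by (simp add: F_def)
qed

end
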